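(* Let $X\subset\mathcal M=\mathbb R^4$ be a timelike straight line. Let $\mathtt{Aut}^{\rm c}_X$ be the subgroup of $\mathtt{Aut}^{\rm c}$ consisting of those $f$ with $f(X)=X$. Let $S$ be a non-trivial $\mathtt{Aut}^{\rm c}_X$-invariant equivalence relation on $\mathcal M$. Suppose there exist $p\in X$ and $q\notin X$ with $S(p,q)$. Then $S$ is standard Einstein simultaneity relative to $X$: for all $r,s\in\mathcal M$, $S(r,s)$ holds iff $\eta(s-r,u)=0$, where $u$ is a direction vector of $X$. Equivalently, the equivalence classes are exactly the hyperplanes Minkowski-orthogonal to $X$.
   Context: Spacetime is $\mathcal M=\mathbb R^4$, with points $(t,\vec x)$, equipped with the Minkowski bilinear form $\eta(x,y)=x^0y^0-x^1y^1-x^2y^2-x^3y^3$. A straight line is timelike if its direction vector $u$ satisfies $\eta(u,u)>0$. $\mathtt{Aut}^{\rm c}$ (the causal automorphism group) is the group of all bijections $f$ of $\mathbb R^4$ such that, for all $p,q$, $\eta(p-q,p-q)\ge0$ iff $\eta(f(p)-f(q),f(p)-f(q))\ge0$. Equivalently (a result of Alexandrov), $\mathtt{Aut}^{\rm c}$ is the group generated by: - the maps $p\mapsto Lp+a$ with $a\in\mathbb R^4$ and $L$ a real $4\times4$ matrix with $L\eta L^{\top}=\eta$, $\det L=1$, $L^0{}_0\ge1$; - the time reflection $(t,\vec x)\mapsto(-t,\vec x)$; - the space reflection $(t,\vec x)\mapsto(t,-\vec x)$; - the dilatations $p\mapsto\lambda p$ with $\lambda>0$. An equivalence relation $S$ is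 $G$-invariant if $S(p,q)\Leftrightarrow S(g\cdot p,g\cdot q)$ for all $g\in G$ and all $p,q$. It is non-trivial if it is neither the one-class relation nor the equality relation. *)

theory Defs
  imports "HOL-Analysis.Analysis"
begin

text \<open>Points of Minkowski spacetime: real^4, coordinate 0 is time, 1,2,3 are space.\<close>
type_synonym point = "real ^ 4"

definition eta :: "point \<Rightarrow> point \<Rightarrow> real" where
  "eta x y = x$0 * y$0 - x$1 * y$1 - x$2 * y$2 - x$3 * y$3"

definition causal_aut :: "(point \<Rightarrow> point) \<Rightarrow> bool" where
  "causal_aut f \<longleftrightarrow> bij f \<and>
     (\<forall>p q. eta (p - q) (p - q) \<ge> 0 \<longleftrightarrow> eta (f p - f q) (f p - f q) \<ge> 0)"

definition line :: "point \<Rightarrow> point \<Rightarrow> point set" where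
  "line a u = {a + t *\<^sub>R u | t. True}"

definition invariant_under :: "((point \<Rightarrow> point) \<Rightarrow> bool) \<Rightarrow> (point \<Rightarrow> point \<Rightarrow> bool) \<Rightarrow> bool" where
  "invariant_under G S \<longleftrightarrow> (\<forall>g. G g \<longrightarrow> (\<forall>p q. S p q \<longleftrightarrow> S (g p) (g q)))"

definition nontrivial_rel :: "(point \<Rightarrow> point \<Rightarrow> bool) \<Rightarrow> bool" where
  "nontrivial_rel S \<longleftrightarrow> \<not> (\<forall>p q. S p q) \<and> \<not> (\<forall>p q. S p q \<longleftrightarrow> p = q)"

end

theory Submission
  imports Defs
begin

text \<open>The maps fixing the line \<open>X\<close> include the translations along \<open>X\<close>, the dilations and
  the time reflection centred on \<open>X\<close>, and the Minkowski reflections in hyperplanes containing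
  the direction \<open>u\<close>. With \<open>p \<in> X\<close> related to \<open>q \<notin> X\<close>, the time reflection at \<open>p\<close> and a
  dilation relate \<open>p\<close> to the foot \<open>c\<close> of \<open>q\<close> on \<open>X\<close>, so \<open>c\<close> is related to \<open>c + w\<close> for a
  non-zero \<open>w \<bottom> u\<close>. All vectors orthogonal to \<open>u\<close> are spacelike, and any two of them are
  carried into each other by a dilation followed by a reflection; with the translations along
  \<open>X\<close>, each hyperplane orthogonal to \<open>u\<close> lies in one class. If some class also contained two
  points on a common parallel of \<open>X\<close>, dilations at \<open>X\<close> would merge all these hyperplanes into a
  single class.\<close>

lemma eta_add_left [simp]: "eta (x + y) z = eta x z + eta y z"
  by (simp add: eta_def algebra_simps)

lemma eta_add_right [simp]: "eta z (x + y) = eta z x + eta z y"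
  by (simp add: eta_def algebra_simps)

lemma eta_diff_left [simp]: "eta (x - y) z = eta x z - eta y z"
  by (simp add: eta_def algebra_simps)

lemma eta_diff_right [simp]: "eta z (x - y) = eta z x - eta z y"
  by (simp add: eta_def algebra_simps)

lemma eta_scaleR_left [simp]: "eta (t *\<^sub>R x) z = t * eta x z"
  by (simp add: eta_def algebra_simps)

lemma eta_scaleR_right [simp]: "eta z (t *\<^sub>R x) = t * eta z x"
  by (simp add: eta_def algebra_simps)

lemma eta_zero_left [simp]: "eta 0 x = 0"
  by (simp add: eta_def)

lemma eta_commute: "eta x y = eta y x"
  by (simp add: eta_def algebra_simps)

lemma point_eq_0I:
  fixes w :: point
  assumes "w$0 = 0" "w$1 = 0" "w$2 = 0" "w$3 = 0"
  shows "w = 0"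
proof -
  have four: "(4::4) = 0" by simp
  have "\<forall>i::4. w$i = 0"
    unfolding forall_4 four using assms by simp
  then show ?thesis
    by (simp add: vec_eq_iff)
qed

lemma eta_orthogonal_timelike_neg:
  fixes w u :: point
  assumes timelike: "eta u u > 0" and orth: "eta w u = 0" and "w \<noteq> 0"
  shows "eta w w < 0"
proof -
  define s where "s = w$1 * u$1 + w$2 * u$2 + w$3 * u$3"
  define W where "W = (w$1)\<^sup>2 + (w$2)\<^sup>2 + (w$3)\<^sup>2"
  define U where "U = (u$1)\<^sup>2 + (u$2)\<^sup>2 + (u$3)\<^sup>2"
  have time_part: "w$0 * u$0 = s"
    using orth by (simp add: eta_def s_def)
  have U_less: "U < (u$0)\<^sup>2"
    using timelike by (simp add: eta_def U_def power2_eq_square)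
  have "W * U - s\<^sup>2 = (w$1 * u$2 - w$2 * u$1)\<^sup>2 + (w$1 * u$3 - w$3 * u$1)\<^sup>2
      + (w$2 * u$3 - w$3 * u$2)\<^sup>2"
    by (simp add: W_def U_def s_def power2_eq_square algebra_simps)
  then have cauchy_schwarz: "s\<^sup>2 \<le> W * U"
    by (smt (verit) zero_le_power2)
  show ?thesis
  proof (cases "W = 0")
    case True
    then have "w$1 = 0" "w$2 = 0" "w$3 = 0"
      unfolding W_def by (smt (verit) zero_le_power2 power_eq_0_iff)+
    moreover have "u$0 \<noteq> 0"
    proof
      assume "u$0 = 0"
      moreover have "0 \<le> U" by (simp add: U_def)
      ultimately show False using U_less by simp
    qed
    ultimately have "w$0 = 0"
      using time_part by (simp add: s_def)
    with \<open>w$1 = 0\<close> \<open>w$2 = 0\<close> \<open>w$3 = 0\<close> \<open>w \<noteq> 0\<close> show ?thesis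
      using point_eq_0I by blast
  next
    case False
    then have "W > 0"
      unfolding W_def by (smt (verit) zero_le_power2)
    have "(w$0)\<^sup>2 * (u$0)\<^sup>2 = s\<^sup>2"
      using time_part by (metis power_mult_distrib)
    also have "\<dots> \<le> W * U" by (rule cauchy_schwarz)
    also have "\<dots> < W * (u$0)\<^sup>2"
      using \<open>W > 0\<close> U_less by simp
    finally have "(w$0)\<^sup>2 < W"
      by (rule mult_right_less_imp_less) simp
    then show ?thesis
      by (simp add: eta_def W_def power2_eq_square)
  qed
qed

definition eta_reflect :: "point \<Rightarrow> point \<Rightarrow> point" where
  "eta_reflect n v = v - (2 * eta v n / eta n n) *\<^sub>R n"

lemma linear_eta_reflect: "linear (eta_reflect n)"
  by (rule linearI) (simp_all add: eta_reflect_def algebra_simps add_divide_distrib)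

lemma eta_reflect_involution:
  assumes "eta n n \<noteq> 0"
  shows "eta_reflect n (eta_reflect n v) = v"
  using assms by (simp add: eta_reflect_def algebra_simps)

lemma eta_eta_reflect:
  assumes "eta n n \<noteq> 0"
  shows "eta (eta_reflect n v) (eta_reflect n v) = eta v v"
  using assms by (simp add: eta_reflect_def eta_commute[of n v] field_simps power2_eq_square)

lemma eta_reflect_self:
  assumes "eta n n \<noteq> 0"
  shows "eta_reflect n n = - n"
  using assms by (simp add: eta_reflect_def scaleR_2)

lemma eta_reflect_orthogonal: "eta v n = 0 \<Longrightarrow> eta_reflect n v = v"
  by (simp add: eta_reflect_def)

lemma eta_reflect_swap:
  assumes "eta v v = eta w w" and "eta (v - w) (v - w) \<noteq> 0"
  shows "eta_reflect (v - w) v = w"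
proof -
  have "2 * eta v (v - w) = eta (v - w) (v - w)"
    using assms(1) by (simp add: eta_commute[of w v])
  then show ?thesis
    using assms(2) unfolding eta_reflect_def by simp
qed

lemma causal_aut_affine:
  assumes "linear L" "bij L" "k > 0" "\<And>v. eta (L v) (L v) = k * eta v v"
  shows "causal_aut (\<lambda>x. c' + L (x - c))"
proof -
  have "bij ((+) c' \<circ> L \<circ> (\<lambda>x. x - c))"
    using assms(2) by (intro bij_comp bij_plus bij_diff_right)
  moreover have "eta (c' + L (p - c) - (c' + L (q - c))) (c' + L (p - c) - (c' + L (q - c)))
      = k * eta (p - q) (p - q)" for p q
    using assms(4)[of "p - q"] linear_diff[OF assms(1)] by simp
  ultimately show ?thesis
    using \<open>k > 0\<close> by (simp add: causal_aut_def comp_def zero_le_mult_iff)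
qed

lemma mem_line_iff:
  assumes "c \<in> line a u"
  shows "x \<in> line a u \<longleftrightarrow> (\<exists>s. x = c + s *\<^sub>R u)"
proof -
  obtain t where "c = a + t *\<^sub>R u"
    using assms by (auto simp: line_def)
  then have shift: "c + s *\<^sub>R u = a + (t + s) *\<^sub>R u" for s
    by (simp add: scaleR_add_left)
  show ?thesis
  proof
    assume "x \<in> line a u"
    then obtain s where "x = a + s *\<^sub>R u"
      by (auto simp: line_def)
    then have "x = c + (s - t) *\<^sub>R u"
      using shift[of "s - t"] by simp
    then show "\<exists>s. x = c + s *\<^sub>R u" ..
  next
    assume "\<exists>s. x = c + s *\<^sub>R u"
    then show "x \<in> line a u"
      using shift by (auto simp: line_def)
  qed
qed

lemma line_add_scaleR: "c \<in> line a u \<Longrightarrow> c + t *\<^sub>R u \<in> line a u"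
  using mem_line_iff by blast

lemma affine_image_line:
  assumes "linear L" "L u = \<mu> *\<^sub>R u" "\<mu> \<noteq> 0" "c \<in> line a u" "c' \<in> line a u"
  shows "(\<lambda>x. c' + L (x - c)) ` line a u = line a u"
proof -
  have image: "c' + L (s *\<^sub>R u) = c' + (s * \<mu>) *\<^sub>R u" for s
    using assms(2) linear_cmul[OF assms(1)] by simp
  show ?thesis
  proof (intro equalityI subsetI)
    fix y assume "y \<in> (\<lambda>x. c' + L (x - c)) ` line a u"
    then obtain x where x: "x \<in> line a u" "y = c' + L (x - c)"
      by blast
    obtain s where "x = c + s *\<^sub>R u"
      using x(1) mem_line_iff[OF assms(4)] by blast
    then show "y \<in> line a u"
      using x(2) image line_add_scaleR[OF assms(5)] by simp
  next
    fix y assume "y \<in> line a u"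
    then obtain r where "y = c' + r *\<^sub>R u"
      using assms(5) mem_line_iff by blast
    then have "y = c' + L ((c + (r / \<mu>) *\<^sub>R u) - c)"
      using image[of "r / \<mu>"] assms(3) by simp
    then show "y \<in> (\<lambda>x. c' + L (x - c)) ` line a u"
      using assms(4) line_add_scaleR by blast
  qed
qed

locale line_invariant_equivalence =
  fixes a u :: point and S :: "point \<Rightarrow> point \<Rightarrow> bool"
  assumes timelike: "eta u u > 0"
    and equiv: "equivp S"
    and invariant: "invariant_under (\<lambda>f. causal_aut f \<and> f ` line a u = line a u) S"
begin

lemma S_refl: "S p p"
  using equiv by (meson equivp_reflp)

lemma S_sym: "S p q \<Longrightarrow> S q p"
  using equiv by (meson equivp_symp)

lemma S_trans: "S p q \<Longrightarrow> S q r \<Longrightarrow> S p r"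
  using equiv by (meson equivp_transp)

lemma S_affine:
  assumes "linear L" "bij L" "k > 0" "\<And>v. eta (L v) (L v) = k * eta v v"
    and "L u = \<mu> *\<^sub>R u" "\<mu> \<noteq> 0" "c \<in> line a u" "c' \<in> line a u"
    and "S p q"
  shows "S (c' + L (p - c)) (c' + L (q - c))"
  using invariant causal_aut_affine[OF assms(1-4)] affine_image_line[OF assms(1,5-8)] \<open>S p q\<close>
  unfolding invariant_under_def by blast

lemma S_translate:
  assumes "S p q"
  shows "S (p + t *\<^sub>R u) (q + t *\<^sub>R u)"
proof -
  have a: "a \<in> line a u"
    unfolding line_def by (metis (mono_tags) add_0_right mem_Collect_eq scale_zero_left)
  have "S (a + t *\<^sub>R u + id (p - a)) (a + t *\<^sub>R u + id (q - a))"
    by (rule S_affine[where k = 1 and \<mu> = 1]) (simp_all add: linear_ident bij_id[unfolded id_def] a line_add_scaleR assms)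
  then show ?thesis
    by (simp add: algebra_simps)
qed

lemma S_dilate:
  assumes "c \<in> line a u" "l \<noteq> 0" "S p q"
  shows "S (c + l *\<^sub>R (p - c)) (c + l *\<^sub>R (q - c))"
proof -
  have "bij (scaleR l :: point \<Rightarrow> point)"
    using \<open>l \<noteq> 0\<close> by (intro bijI injective_scale surjI[where f = "scaleR (inverse l)"]) simp_all
  moreover have "0 < l\<^sup>2"
    using \<open>l \<noteq> 0\<close> by simp
  ultimately show ?thesis
    using S_affine[of "scaleR l" "l\<^sup>2" l] assms by (simp add: linear_scaleR power2_eq_square)
qed

lemma S_reflect:
  assumes "eta n n \<noteq> 0" and "eta_reflect n u = \<mu> *\<^sub>R u" "\<mu> \<noteq> 0"
    and "c \<in> line a u" "S p q"
  shows "S (c + eta_reflect n (p - c)) (c + eta_reflect n (q - c))"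
proof -
  have "bij (eta_reflect n)"
    by (rule involuntory_imp_bij) (rule eta_reflect_involution[OF assms(1)])
  then show ?thesis
    using S_affine[of "eta_reflect n" 1 \<mu> c c p q] linear_eta_reflect eta_eta_reflect[OF assms(1)] assms
    by simp
qed

lemma S_time_reflect:
  assumes "c \<in> line a u" "S p q"
  shows "S (c + eta_reflect u (p - c)) (c + eta_reflect u (q - c))"
  using S_reflect[of u "-1"] assms timelike eta_reflect_self by simp

lemma S_space_reflect:
  assumes "eta n u = 0" "n \<noteq> 0" "c \<in> line a u" "S p q"
  shows "S (c + eta_reflect n (p - c)) (c + eta_reflect n (q - c))"
proof -
  have "eta n n < 0"
    using eta_orthogonal_timelike_neg timelike assms(1,2) by blast
  moreover have "eta_reflect n u = 1 *\<^sub>R u"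
    using eta_reflect_orthogonal assms(1) eta_commute by simp
  ultimately show ?thesis
    using S_reflect[of n 1 c p q] assms by simp
qed

text \<open>A dilation gives \<open>w\<^sub>0\<close> the Minkowski norm of \<open>w\<close>; the reflection in \<open>v - w\<close> then swaps
  the two vectors of equal norm.\<close>

lemma S_orthogonal_vectors:
  assumes c: "c \<in> line a u" and w0: "eta w0 u = 0" "w0 \<noteq> 0" "S c (c + w0)"
    and w: "eta w u = 0"
  shows "S c (c + w)"
proof (cases "w = 0")
  case True
  then show ?thesis using S_refl by simp
next
  case False
  have neg0: "eta w0 w0 < 0" and neg: "eta w w < 0"
    using eta_orthogonal_timelike_neg timelike w0 w False by blast+
  define l where "l = sqrt (eta w w / eta w0 w0)"
  have "l > 0" "l * l = eta w w / eta w0 w0"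
    using neg0 neg by (simp_all add: l_def divide_neg_neg)
  define v where "v = l *\<^sub>R w0"
  have Sv: "S c (c + v)"
    using S_dilate[OF c _ w0(3), of l] \<open>l > 0\<close> by (simp add: v_def)
  have "eta v v = (l * l) * eta w0 w0"
    by (simp add: v_def)
  then have v: "eta v u = 0" "eta v v = eta w w"
    using w0 neg0 \<open>l * l = _\<close> by (simp_all add: v_def)
  show ?thesis
  proof (cases "v = w")
    case True
    then show ?thesis using Sv by simp
  next
    case False
    have "eta (v - w) u = 0"
      using v w by simp
    moreover have "v - w \<noteq> 0"
      using False by simp
    ultimately have "eta (v - w) (v - w) < 0"
      using eta_orthogonal_timelike_neg[OF timelike] by blast
    then have "eta_reflect (v - w) v = w"
      using eta_reflect_swap v(2) by simp
    moreover have "eta_reflect (v - w) 0 = 0"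
      by (simp add: eta_reflect_def)
    ultimately show ?thesis
      using S_space_reflect[OF \<open>eta (v - w) u = 0\<close> \<open>v - w \<noteq> 0\<close> c Sv] by simp
  qed
qed

lemma S_if_orthogonal:
  assumes "c \<in> line a u" "eta w0 u = 0" "w0 \<noteq> 0" "S c (c + w0)"
    and "eta (s - r) u = 0"
  shows "S r s"
proof -
  define c' where "c' = c + (eta (r - c) u / eta u u) *\<^sub>R u"
  have from_c': "S c' z" if "eta (z - c') u = 0" for z
  proof -
    have "S (c + (eta (r - c) u / eta u u) *\<^sub>R u) (c + (z - c') + (eta (r - c) u / eta u u) *\<^sub>R u)"
      using S_translate[OF S_orthogonal_vectors[OF assms(1-4) that]] .
    then show ?thesis
      by (simp add: c'_def algebra_simps)
  qed
  have "S c' r" "S c' s"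
    using from_c' timelike assms(5) by (simp_all add: c'_def)
  then show ?thesis
    using S_sym S_trans by blast
qed

lemma S_total_if_timelike_pair:
  assumes orthogonal: "\<And>r s. eta (s - r) u = 0 \<Longrightarrow> S r s"
    and pair: "S r (r + t *\<^sub>R u)" "t \<noteq> 0"
  shows "S x y"
proof -
  define c where "c = a + (eta (r - a) u / eta u u) *\<^sub>R u"
  have c: "c \<in> line a u"
    by (auto simp: c_def line_def)
  have "S c r" "S (r + t *\<^sub>R u) (c + t *\<^sub>R u)"
    using orthogonal timelike by (simp_all add: c_def)
  then have "S c (c + t *\<^sub>R u)"
    using pair S_trans by blast
  have on_line: "S c (c + s *\<^sub>R u)" for s
  proof (cases "s = 0")
    case True
    then show ?thesis using S_refl by simp
  next
    case False
    then show ?thesis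
      using S_dilate[OF c _ \<open>S c (c + t *\<^sub>R u)\<close>, of "s / t"] \<open>t \<noteq> 0\<close> by simp
  qed
  have "S c z" for z
  proof -
    define z' where "z' = c + (eta (z - c) u / eta u u) *\<^sub>R u"
    have "S c z'" "S z' z"
      using on_line orthogonal timelike by (simp_all add: z'_def)
    then show ?thesis
      using S_trans by blast
  qed
  then show ?thesis
    using S_sym S_trans by blast
qed

text \<open>The time reflection at \<open>p\<close> moves \<open>q\<close> by \<open>-2t u\<close>; translating back and halving by a dilation
  at \<open>p\<close> relates \<open>p\<close> to the foot of \<open>q\<close>.\<close>

lemma S_foot:
  assumes p: "p \<in> line a u" and "S p q"
  shows "S p (p + (eta (q - p) u / eta u u) *\<^sub>R u)"
proof -
  define t where "t = eta (q - p) u / eta u u"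
  have "eta_reflect u (q - p) = (q - p) - (2 * t) *\<^sub>R u"
    using timelike by (simp add: eta_reflect_def t_def)
  moreover have "eta_reflect u 0 = 0"
    by (simp add: eta_reflect_def)
  ultimately have "S p (q - (2 * t) *\<^sub>R u)"
    using S_time_reflect[OF p \<open>S p q\<close>] by simp
  from S_translate[OF this, of "2 * t"] have "S (p + (2 * t) *\<^sub>R u) q"
    by simp
  then have "S p (p + (2 * t) *\<^sub>R u)"
    using \<open>S p q\<close> S_sym S_trans by blast
  from S_dilate[OF p _ this, of "1 / 2"] have "S p (p + t *\<^sub>R u)"
    by simp
  then show ?thesis
    by (simp only: t_def)
qed


lemma S_if_orthogonal_of_link:
  assumes p: "p \<in> line a u" and q: "q \<notin> line a u" and "S p q"
    and "eta (s - r) u = 0"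
  shows "S r s"
proof -
  define c where "c = p + (eta (q - p) u / eta u u) *\<^sub>R u"
  have c: "c \<in> line a u"
    using p line_add_scaleR by (simp add: c_def)
  have "S c q"
    using S_foot[OF p \<open>S p q\<close>] \<open>S p q\<close> S_sym S_trans unfolding c_def[symmetric] by blast
  moreover have "eta (q - c) u = 0"
    using timelike by (simp add: c_def)
  moreover have "q - c \<noteq> 0"
    using c q by auto
  ultimately show ?thesis
    using S_if_orthogonal[OF c, of "q - c"] \<open>eta (s - r) u = 0\<close> by simp
qed

lemma S_total_if_not_orthogonal:
  assumes orthogonal: "\<And>r s. eta (s - r) u = 0 \<Longrightarrow> S r s"
    and "S r s" "eta (s - r) u \<noteq> 0"
  shows "S x y"
proof -
  define t where "t = eta (s - r) u / eta u u"
  have "S s (r + t *\<^sub>R u)"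
    using orthogonal timelike by (simp add: t_def)
  then have "S r (r + t *\<^sub>R u)"
    using \<open>S r s\<close> S_trans by blast
  moreover have "t \<noteq> 0"
    using \<open>eta (s - r) u \<noteq> 0\<close> timelike by (simp add: t_def)
  ultimately show ?thesis
    using S_total_if_timelike_pair[OF orthogonal] by blast
qed
end

theorem theorem7:
  fixes a u :: point and X :: "point set" and S :: "point \<Rightarrow> point \<Rightarrow> bool"
  assumes timelike: "eta u u > 0"
    and X_def: "X = line a u"
    and equiv: "equivp S"
    and inv: "invariant_under (\<lambda>f. causal_aut f \<and> f ` X = X) S"
    and nontriv: "nontrivial_rel S"
    and link: "\<exists>p q. p \<in> X \<and> q \<notin> X \<and> S p q"
  shows "\<forall>r s. S r s \<longleftrightarrow> eta (s - r) u = 0"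
proof -
  interpret line_invariant_equivalence a u S
    using timelike equiv inv X_def by unfold_locales simp_all
  obtain p q where "p \<in> line a u" "q \<notin> line a u" "S p q"
    using link X_def by blast
  then have orthogonal: "eta (s - r) u = 0 \<Longrightarrow> S r s" for r s
    using S_if_orthogonal_of_link by blast
  moreover have "\<not> (\<forall>x y. S x y)"
    using nontriv by (simp add: nontrivial_rel_def)
  ultimately show ?thesis
    using S_total_if_not_orthogonal[OF orthogonal] by blast
qed

end
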